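(* Let $X \sim \mathcal{N}(\mu,\sigma^2)$ be a single observation, with $\mu\in\mathbb{R}$ and $\sigma>0$ unknown, and for $c>1$ let $I_2(c) = (-c|X|,\; c|X|)$. Then the coverage probability $P_{\mu,\sigma}(\mu \in I_2(c))$ depends on $(\mu,\sigma)$ only through $\lambda=\mu/\sigma$ and is an even function of $\lambda$. Writing $\lambda=|\mu|/\sigma\ge 0$, it equals $$P_2(\lambda,c) = \Phi\Big(\frac{c-1}{c}\lambda\Big) + 1 - \Phi\Big(\frac{c+1}{c}\lambda\Big).$$ Over $\lambda\ge0$, $P_2(\lambda,c)$ is minimized at $$\lambda^*(c) = \Big[\frac{c}{2}\log\frac{c+1}{c-1}\Big]^{1/2}.$$ Consequently, for every $\alpha$ with $0<\alpha<1/2$ there exists a constant $c=c(\alpha)>1$ such that $\inf_{\mu\in\mathbb{R},\sigma>0} P_{\mu,\sigma}(\mu\in I_2(c(\alpha))) \ge 1-\alpha$.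
   Context: $\Phi$ denotes the standard normal cumulative distribution function. $I_2(c)$ is the (Stein) interval symmetric about $0$ with half-length $c|X|$. *)

theory Defs
  imports "HOL-Probability.Probability"
begin

definition normal_law :: "real \<Rightarrow> real \<Rightarrow> real measure" where
  "normal_law mu sig = density lborel (normal_density mu sig)"

definition Phi :: "real \<Rightarrow> real" where
  "Phi x = measure (normal_law 0 1) {..x}"

definition coverage :: "real \<Rightarrow> real \<Rightarrow> real \<Rightarrow> real" where
  "coverage c mu sig = measure (normal_law mu sig) {x. - c * \<bar>x\<bar> < mu \<and> mu < c * \<bar>x\<bar>}"

definition P2 :: "real \<Rightarrow> real \<Rightarrow> real" where
  "P2 lam c = Phi ((c - 1) / c * lam) + 1 - Phi ((c + 1) / c * lam)"

definition lambda_star :: "real \<Rightarrow> real" where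
  "lambda_star c = sqrt (c / 2 * ln ((c + 1) / (c - 1)))"

end

theory Submission
  imports Defs
begin

text \<open>Writing \<open>X = \<mu> - sign(\<mu>) \<sigma> Z\<close> with \<open>Z\<close> standard normal and \<open>L = |\<mu>|/\<sigma>\<close>, the
  event \<open>\<mu> \<in> I\<^sub>2(c)\<close> becomes \<open>|Z - L| > L/c\<close>, whose probability is \<open>P\<^sub>2(L, c)\<close>.
  The derivative of \<open>P\<^sub>2\<close> in \<open>\<lambda>\<close> is \<open>a \<phi>(a\<lambda>) - b \<phi>(b\<lambda>)\<close> with \<open>a = (c-1)/c\<close>,
  \<open>b = (c+1)/c\<close>; comparing logarithms shows it is \<open>\<le> 0\<close> exactly for \<open>\<lambda> \<le> \<lambda>\<^sup>*(c)\<close>.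
  For the uniform bound, \<open>1 - P\<^sub>2(\<lambda>, c)\<close> is the standard normal mass of an interval of
  length \<open>2\<lambda>/c\<close> to the right of \<open>\<lambda>/2\<close> (when \<open>c \<ge> 2\<close>), which is at most
  \<open>(2\<lambda>/c) \<phi>(\<lambda>/2) \<le> 4/c\<close> because \<open>x \<phi>(x) \<le> 1\<close>.\<close>

lemma sets_normal_law [simp]: "sets (normal_law mu sig) = sets borel"
  unfolding normal_law_def by simp

lemma space_normal_law [simp]: "space (normal_law mu sig) = UNIV"
  unfolding normal_law_def by simp

lemma prob_space_normal_law: "sig > 0 \<Longrightarrow> prob_space (normal_law mu sig)"
  unfolding normal_law_def by (rule prob_space_normal_density)

lemma emeasure_normal_law:
  "A \<in> sets borel \<Longrightarrow>
     emeasure (normal_law mu sig) A = (\<integral>\<^sup>+x. ennreal (normal_density mu sig x) * indicator A x \<partial>lborel)"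
  unfolding normal_law_def by (subst emeasure_density) auto

lemma emeasure_normal_law_affine:
  fixes s :: real
  assumes s: "s \<noteq> 0" and A [measurable]: "A \<in> sets borel"
  shows "emeasure (normal_law mu \<bar>s\<bar>) A = emeasure (normal_law 0 1) {z. mu + s * z \<in> A}"
proof -
  have density: "\<bar>s\<bar> * normal_density mu \<bar>s\<bar> (mu + s * x) = std_normal_density x" for x
    using s by (simp add: normal_density_def real_sqrt_mult power_mult_distrib field_simps)
  have "emeasure (normal_law mu \<bar>s\<bar>) A
      = (\<integral>\<^sup>+x. ennreal (normal_density mu \<bar>s\<bar> x) * indicator A x \<partial>lborel)"
    by (rule emeasure_normal_law) simp
  also have "\<dots> = \<bar>s\<bar> * (\<integral>\<^sup>+x. ennreal (normal_density mu \<bar>s\<bar> (mu + s * x)) * indicator A (mu + s * x) \<partial>lborel)"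
    by (rule nn_integral_real_affine[OF _ s]) measurable
  also have "\<dots> = (\<integral>\<^sup>+x. ennreal (\<bar>s\<bar> * normal_density mu \<bar>s\<bar> (mu + s * x)) * indicator A (mu + s * x) \<partial>lborel)"
    by (subst nn_integral_cmult[symmetric]) (auto simp: ennreal_mult' mult.assoc)
  also have "\<dots> = (\<integral>\<^sup>+x. ennreal (std_normal_density x) * indicator {z. mu + s * z \<in> A} x \<partial>lborel)"
    by (simp add: density indicator_def)
  also have "\<dots> = emeasure (normal_law 0 1) {z. mu + s * z \<in> A}"
    by (rule emeasure_normal_law[symmetric]) measurable
  finally show ?thesis .
qed

lemma measure_normal_law_affine:
  fixes s :: real
  assumes "s \<noteq> 0" and "A \<in> sets borel"
  shows "measure (normal_law mu \<bar>s\<bar>) A = measure (normal_law 0 1) {z. mu + s * z \<in> A}"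
  using emeasure_normal_law_affine[OF assms] by (simp add: measure_def)

lemma measure_normal_law_singleton [simp]: "measure (normal_law mu sig) {x} = 0"
proof -
  have "emeasure (normal_law mu sig) {x} = 0"
    by (simp add: emeasure_normal_law nn_integral_0_iff_AE
        eventually_mono[OF AE_lborel_singleton[of x]])
  then show ?thesis by (simp add: measure_def)
qed

lemma Phi_lessThan: "measure (normal_law 0 1) {..<x} = Phi x"
proof -
  interpret prob_space "normal_law 0 1" by (rule prob_space_normal_law) simp
  have "{..x} = {..<x} \<union> {x}" by auto
  then have "measure (normal_law 0 1) {..x} = measure (normal_law 0 1) ({..<x} \<union> {x})"
    by simp
  also have "\<dots> = measure (normal_law 0 1) {..<x}"
    by (subst finite_measure_Union) auto
  finally show ?thesis unfolding Phi_def by simp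
qed

lemma Phi_greaterThan: "measure (normal_law 0 1) {x<..} = 1 - Phi x"
proof -
  interpret prob_space "normal_law 0 1" by (rule prob_space_normal_law) simp
  have "{x<..} = space (normal_law 0 1) - {..x}" by auto
  then show ?thesis unfolding Phi_def using prob_compl[of "{..x}"] by simp
qed

lemma measure_std_normal_abs_diff_gt:
  assumes "t \<ge> 0"
  shows "measure (normal_law 0 1) {z. t < \<bar>z - m\<bar>} = Phi (m - t) + 1 - Phi (m + t)"
proof -
  interpret prob_space "normal_law 0 1" by (rule prob_space_normal_law) simp
  have "{z. t < \<bar>z - m\<bar>} = {..<m - t} \<union> {m + t<..}" by auto
  moreover have "measure (normal_law 0 1) ({..<m - t} \<union> {m + t<..})
      = measure (normal_law 0 1) {..<m - t} + measure (normal_law 0 1) {m + t<..}"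
    using assms by (intro finite_measure_Union) auto
  ultimately show ?thesis by (simp add: Phi_lessThan Phi_greaterThan)
qed

lemma coverage_eq_P2:
  assumes c: "c > 1" and sig: "sig > 0"
  shows "coverage c mu sig = P2 (\<bar>mu\<bar> / sig) c"
proof -
  define s where "s = (if mu \<ge> 0 then - sig else sig)"
  define L where "L = \<bar>mu\<bar> / sig"
  have s: "s \<noteq> 0" "\<bar>s\<bar> = sig" using sig by (auto simp: s_def)
  have "\<bar>mu + s * z\<bar> = sig * \<bar>z - L\<bar>" for z
    using sig by (auto simp: s_def L_def field_simps abs_mult abs_minus_commute)
  then have event: "{z. mu + s * z \<in> {x. - c * \<bar>x\<bar> < mu \<and> mu < c * \<bar>x\<bar>}} = {z. L / c < \<bar>z - L\<bar>}"
    using sig c by (auto simp: L_def field_simps abs_less_iff)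
  have "coverage c mu sig = measure (normal_law 0 1) {z. L / c < \<bar>z - L\<bar>}"
    unfolding coverage_def using measure_normal_law_affine[OF s(1), of _ mu] s(2) event by simp
  also have "\<dots> = P2 L c"
    using c sig by (subst measure_std_normal_abs_diff_gt) (auto simp: L_def P2_def field_simps)
  finally show ?thesis by (simp add: L_def)
qed

lemma continuous_on_std_normal_density: "continuous_on S std_normal_density"
  unfolding normal_density_def by (intro continuous_intros) auto

lemma Phi_diff_eq_integral:
  assumes "a \<le> b"
  shows "Phi b - Phi a = integral {a..b} std_normal_density"
proof -
  interpret prob_space "normal_law 0 1" by (rule prob_space_normal_law) simp
  have "{..b} = {..<a} \<union> {a..b}" using assms by auto
  then have "Phi b = measure (normal_law 0 1) {..<a} + measure (normal_law 0 1) {a..b}"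
    unfolding Phi_def by (subst finite_measure_Union[symmetric]) auto
  then have "Phi b - Phi a = measure (normal_law 0 1) {a..b}"
    by (simp add: Phi_lessThan)
  moreover have "(std_normal_density has_integral integral {a..b} std_normal_density) {a..b}"
    by (intro integrable_integral integrable_continuous_interval continuous_on_std_normal_density)
  then have "emeasure (normal_law 0 1) {a..b} = ennreal (integral {a..b} std_normal_density)"
    by (simp add: emeasure_normal_law nn_integral_has_integral_lebesgue')
  ultimately show ?thesis
    by (simp add: measure_def integral_nonneg integrable_continuous_interval
        continuous_on_std_normal_density)
qed

lemma DERIV_Phi: "(Phi has_real_derivative std_normal_density x) (at x)"
proof -
  have "((\<lambda>y. integral {x-1..y} std_normal_density) has_real_derivative std_normal_density x)
          (at x within {x-1..x+1})"
    by (intro integral_has_real_derivative continuous_on_std_normal_density) auto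
  then have "((\<lambda>y. Phi (x-1) + integral {x-1..y} std_normal_density) has_real_derivative
               std_normal_density x) (at x)"
    by (auto simp: at_within_Icc_at intro!: derivative_eq_intros)
  then show ?thesis
  proof (rule has_field_derivative_transform_within_open[of _ _ _ "{x-1<..<x+1}"])
    show "Phi (x-1) + integral {x-1..y} std_normal_density = Phi y" if "y \<in> {x-1<..<x+1}" for y
      using that Phi_diff_eq_integral[of "x-1" y] by simp
  qed auto
qed

lemma DERIV_P2:
  "((\<lambda>l. P2 l c) has_real_derivative
     (c-1)/c * std_normal_density ((c-1)/c * l) - (c+1)/c * std_normal_density ((c+1)/c * l)) (at l)"
  unfolding P2_def
  by (rule derivative_eq_intros DERIV_chain2[OF DERIV_Phi] | simp add: algebra_simps)+

lemma continuous_on_P2: "continuous_on S (\<lambda>l. P2 l c)"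
  using DERIV_P2 by (meson DERIV_isCont continuous_at_imp_continuous_on)

lemma scaled_std_normal_density_le_iff:
  assumes a: "a > 0" and b: "b > 0"
  shows "a * std_normal_density (a * l) \<le> b * std_normal_density (b * l)
           \<longleftrightarrow> (b\<^sup>2 - a\<^sup>2) * l\<^sup>2 \<le> 2 * ln (b / a)"
proof -
  have exp_form: "x * std_normal_density (x * l) = exp (ln x - (x * l)\<^sup>2 / 2) / sqrt (2 * pi)"
    if "x > 0" for x
    using that unfolding std_normal_density_def diff_conv_add_uminus exp_add by (simp add: exp_minus)
  have "a * std_normal_density (a * l) \<le> b * std_normal_density (b * l)
          \<longleftrightarrow> ln a - (a * l)\<^sup>2 / 2 \<le> ln b - (b * l)\<^sup>2 / 2"
    by (simp add: exp_form a b divide_le_cancel)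
  also have "\<dots> \<longleftrightarrow> (b\<^sup>2 - a\<^sup>2) * l\<^sup>2 \<le> 2 * ln (b / a)"
    using a b by (simp add: ln_div power_mult_distrib algebra_simps) arith
  finally show ?thesis .
qed

lemma lambda_star_nonneg: "c > 1 \<Longrightarrow> lambda_star c \<ge> 0"
  unfolding lambda_star_def by (intro real_sqrt_ge_zero mult_nonneg_nonneg ln_ge_zero) auto

lemma P2_derivative_nonpos_iff:
  assumes c: "c > 1" and l: "l \<ge> 0"
  shows "(c-1)/c * std_normal_density ((c-1)/c * l) - (c+1)/c * std_normal_density ((c+1)/c * l) \<le> 0
           \<longleftrightarrow> l \<le> lambda_star c"
proof -
  have ratio: "((c+1)/c) / ((c-1)/c) = (c+1)/(c-1)" and squares: "((c+1)/c)\<^sup>2 - ((c-1)/c)\<^sup>2 = 4 / c"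
    using c by (simp_all add: field_simps power2_eq_square)
  have "(c-1)/c * std_normal_density ((c-1)/c * l) - (c+1)/c * std_normal_density ((c+1)/c * l) \<le> 0
          \<longleftrightarrow> (((c+1)/c)\<^sup>2 - ((c-1)/c)\<^sup>2) * l\<^sup>2 \<le> 2 * ln (((c+1)/c) / ((c-1)/c))"
    unfolding diff_le_0_iff_le using c by (intro scaled_std_normal_density_le_iff) auto
  also have "\<dots> \<longleftrightarrow> 4 / c * l\<^sup>2 \<le> 2 * ln ((c+1)/(c-1))"
    by (simp only: ratio squares)
  also have "\<dots> \<longleftrightarrow> l\<^sup>2 \<le> (lambda_star c)\<^sup>2"
    using c by (simp add: lambda_star_def field_simps)
  also have "\<dots> \<longleftrightarrow> l \<le> lambda_star c"
    using l lambda_star_nonneg[OF c] by (simp add: power_mono_iff)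
  finally show ?thesis .
qed

lemma P2_lambda_star_le:
  assumes c: "c > 1" and l: "l \<ge> 0"
  shows "P2 (lambda_star c) c \<le> P2 l c"
proof (cases "l \<le> lambda_star c")
  case True
  show ?thesis
  proof (rule DERIV_nonpos_imp_decreasing_open[OF True _ continuous_on_P2])
    fix x assume "l < x" "x < lambda_star c"
    then show "\<exists>y. ((\<lambda>l. P2 l c) has_real_derivative y) (at x) \<and> y \<le> 0"
      using DERIV_P2 P2_derivative_nonpos_iff[OF c, of x] l by fastforce
  qed
next
  case False
  show ?thesis
  proof (rule DERIV_nonneg_imp_increasing_open[of _ l, OF _ _ continuous_on_P2])
    show "lambda_star c \<le> l" using False by simp
    fix x assume "lambda_star c < x" "x < l"
    then show "\<exists>y. ((\<lambda>l. P2 l c) has_real_derivative y) (at x) \<and> y \<ge> 0"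
      using DERIV_P2 P2_derivative_nonpos_iff[OF c, of x] lambda_star_nonneg[OF c] by fastforce
  qed
qed

lemma std_normal_density_antimono:
  assumes "0 \<le> x" "x \<le> y"
  shows "std_normal_density y \<le> std_normal_density x"
proof -
  have "x\<^sup>2 \<le> y\<^sup>2" using assms by (intro power_mono)
  then show ?thesis by (simp add: std_normal_density_def divide_right_mono)
qed

lemma mult_std_normal_density_le_one: "x * std_normal_density x \<le> 1"
proof (cases "x \<le> 0")
  case True
  then show ?thesis using mult_nonpos_nonneg[of x "std_normal_density x"] by simp
next
  case False
  have "x \<le> 1 + x\<^sup>2 / 2"
    using zero_le_power2[of "x - 1"] by (simp add: power2_eq_square algebra_simps)
  also have "\<dots> \<le> exp (x\<^sup>2 / 2)" by (rule exp_ge_add_one_self)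
  finally have "x * exp (- x\<^sup>2 / 2) \<le> 1" by (simp add: exp_minus field_simps)
  moreover have "1 \<le> sqrt (2 * pi)" using pi_gt3 by (simp add: real_le_rsqrt)
  ultimately show ?thesis
    using False by (simp add: std_normal_density_def divide_le_eq order_trans)
qed

lemma Phi_diff_le:
  assumes "0 \<le> x" "x \<le> y"
  shows "Phi y - Phi x \<le> (y - x) * std_normal_density x"
proof -
  have "Phi y - Phi x = integral {x..y} std_normal_density"
    using assms(2) by (rule Phi_diff_eq_integral)
  also have "\<dots> \<le> integral {x..y} (\<lambda>_. std_normal_density x)"
    using assms
    by (intro integral_le integrable_continuous_interval continuous_on_std_normal_density
        std_normal_density_antimono) auto
  also have "\<dots> = (y - x) * std_normal_density x"
    using assms by simp
  finally show ?thesis .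
qed

lemma P2_ge_one_minus:
  assumes c: "c \<ge> 2" and l: "l \<ge> 0"
  shows "1 - 4 / c \<le> P2 l c"
proof -
  have lower: "l / 2 \<le> (c-1)/c * l" and upper: "(c-1)/c * l \<le> (c+1)/c * l"
    using c l mult_right_mono[OF c l] by (simp_all add: field_simps)
  have "Phi ((c+1)/c * l) - Phi ((c-1)/c * l)
          \<le> ((c+1)/c * l - (c-1)/c * l) * std_normal_density ((c-1)/c * l)"
    using l lower upper by (intro Phi_diff_le) linarith+
  also have "\<dots> \<le> 2 * l / c * std_normal_density (l / 2)"
    using c l lower by (auto simp: field_simps intro!: mult_left_mono std_normal_density_antimono)
  also have "\<dots> = 4 / c * (l / 2 * std_normal_density (l / 2))"
    by simp
  also have "\<dots> \<le> 4 / c"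
    using c by (intro mult_left_le mult_std_normal_density_le_one) auto
  finally show ?thesis unfolding P2_def by linarith
qed

theorem corollary2:
  shows "(\<forall>c>1.
            (\<exists>g :: real \<Rightarrow> real.
               (\<forall>mu sig. sig > 0 \<longrightarrow> coverage c mu sig = g (mu / sig))
             \<and> (\<forall>lam. g (- lam) = g lam))
          \<and> (\<forall>mu sig. sig > 0 \<longrightarrow> coverage c mu sig = P2 (\<bar>mu\<bar> / sig) c)
          \<and> lambda_star c \<ge> 0
          \<and> (\<forall>lam\<ge>0. P2 (lambda_star c) c \<le> P2 lam c))
       \<and> (\<forall>alpha. 0 < alpha \<and> alpha < 1/2 \<longrightarrow>
            (\<exists>c>1. \<forall>mu sig. sig > 0 \<longrightarrow> coverage c mu sig \<ge> 1 - alpha))"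
proof (intro conjI allI impI)
  fix c :: real assume c: "c > 1"
  show "\<exists>g :: real \<Rightarrow> real. (\<forall>mu sig. sig > 0 \<longrightarrow> coverage c mu sig = g (mu / sig))
          \<and> (\<forall>lam. g (- lam) = g lam)"
    by (rule exI[of _ "\<lambda>l. P2 \<bar>l\<bar> c"]) (auto simp: coverage_eq_P2[OF c])
  show "coverage c mu sig = P2 (\<bar>mu\<bar> / sig) c" if "sig > 0" for mu sig
    using coverage_eq_P2[OF c that] .
  show "lambda_star c \<ge> 0" using lambda_star_nonneg[OF c] .
  show "P2 (lambda_star c) c \<le> P2 lam c" if "lam \<ge> 0" for lam
    using P2_lambda_star_le[OF c that] .
next
  fix alpha :: real assume alpha: "0 < alpha \<and> alpha < 1/2"
  then have c: "4 / alpha \<ge> 2" by (simp add: field_simps)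
  show "\<exists>c>1. \<forall>mu sig. sig > 0 \<longrightarrow> coverage c mu sig \<ge> 1 - alpha"
  proof (intro exI[of _ "4 / alpha"] conjI allI impI)
    fix mu sig :: real assume "sig > 0"
    then show "coverage (4 / alpha) mu sig \<ge> 1 - alpha"
      using c alpha P2_ge_one_minus[OF c, of "\<bar>mu\<bar> / sig"] coverage_eq_P2[of "4 / alpha"] by simp
  qed (use c in simp)
qed

end
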